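(* If a graph $G$ has a $\gamma$-set $D$ such that $\gamma(G-x)>\gamma(G)$ for every $x\in D$, then $\gamma(G)=\gamma_{\rm cer}(G)$.
   Context: All graphs are finite and simple; $G-x$ denotes the graph obtained by deleting vertex $x$. A set $D\subseteq V_G$ is a dominating set of $G$ if every vertex of $V_G-D$ has a neighbor in $D$; $\gamma(G)$ is the minimum cardinality of a dominating set, and a $\gamma$-set is a dominating set of cardinality $\gamma(G)$. A set $D\subseteq V_G$ is a certified dominating set of $G$ if $D$ is a dominating set of $G$ and every vertex of $D$ has either zero or at least two neighbors in $V_G-D$; $\gamma_{\rm cer}(G)$ is the minimum cardinality of a certified dominating set of $G$. *)

theory Defs
  imports Main
begin

text \<open>A finite simple graph is given by a finite vertex set V and an edge relation E
  that is symmetric and irreflexive on V. Only edges between vertices of V matter.\<close>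

definition simple_graph :: "'a set \<Rightarrow> ('a \<Rightarrow> 'a \<Rightarrow> bool) \<Rightarrow> bool" where
  "simple_graph V E \<longleftrightarrow> finite V \<and> (\<forall>u\<in>V. \<forall>v\<in>V. E u v \<longrightarrow> E v u) \<and> (\<forall>v\<in>V. \<not> E v v)"

definition dominating_set :: "'a set \<Rightarrow> ('a \<Rightarrow> 'a \<Rightarrow> bool) \<Rightarrow> 'a set \<Rightarrow> bool" where
  "dominating_set V E D \<longleftrightarrow> D \<subseteq> V \<and> (\<forall>v\<in>V - D. \<exists>u\<in>D. E v u)"

definition domination_number :: "'a set \<Rightarrow> ('a \<Rightarrow> 'a \<Rightarrow> bool) \<Rightarrow> nat" where
  "domination_number V E = Min (card ` {D. dominating_set V E D})"

definition gamma_set :: "'a set \<Rightarrow> ('a \<Rightarrow> 'a \<Rightarrow> bool) \<Rightarrow> 'a set \<Rightarrow> bool" where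
  "gamma_set V E D \<longleftrightarrow> dominating_set V E D \<and> card D = domination_number V E"

definition certified_dominating_set :: "'a set \<Rightarrow> ('a \<Rightarrow> 'a \<Rightarrow> bool) \<Rightarrow> 'a set \<Rightarrow> bool" where
  "certified_dominating_set V E D \<longleftrightarrow> dominating_set V E D \<and>
     (\<forall>v\<in>D. card {u\<in>V - D. E v u} = 0 \<or> card {u\<in>V - D. E v u} \<ge> 2)"

definition certified_domination_number :: "'a set \<Rightarrow> ('a \<Rightarrow> 'a \<Rightarrow> bool) \<Rightarrow> nat" where
  "certified_domination_number V E = Min (card ` {D. certified_dominating_set V E D})"

text \<open>Vertex deletion G - x: the graph on V - {x} with the same (restricted) edge relation.\<close>

end

theory Submission
  imports Defs
begin

text \<open>Let D be a \<gamma>-set with \<gamma>(G - x) > \<gamma>(G) for all x \<in> D. If some v \<in> D had exactly one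
  neighbour u outside D, then (D - {v}) \<union> {u} would dominate G - v: every vertex that relied
  on v is u itself. Hence \<gamma>(G - v) \<le> |D| = \<gamma>(G), a contradiction. So D is certified, which
  gives \<gamma>_cer(G) \<le> \<gamma>(G); the reverse inequality holds in every graph.\<close>

lemma finite_dominating_sets:
  assumes "finite V"
  shows "finite {D. dominating_set V E D}"
proof (rule finite_subset[of _ "Pow V"])
  show "{D. dominating_set V E D} \<subseteq> Pow V" by (auto simp: dominating_set_def)
qed (use assms in simp)

lemma domination_number_le_card:
  assumes "finite V" "dominating_set V E S"
  shows "domination_number V E \<le> card S"
  unfolding domination_number_def
  using assms finite_dominating_sets by (intro Min_le) auto

lemma certified_dominating_set_carrier: "certified_dominating_set V E V"
  by (simp add: certified_dominating_set_def dominating_set_def)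

lemma finite_certified_dominating_sets:
  assumes "finite V"
  shows "finite {D. certified_dominating_set V E D}"
  by (rule finite_subset[OF _ finite_dominating_sets[OF assms]])
    (auto simp: certified_dominating_set_def)

lemma certified_domination_number_le_card:
  assumes "finite V" "certified_dominating_set V E S"
  shows "certified_domination_number V E \<le> card S"
  unfolding certified_domination_number_def
  using assms finite_certified_dominating_sets by (intro Min_le) auto

lemma domination_number_le_certified_domination_number:
  assumes "finite V"
  shows "domination_number V E \<le> certified_domination_number V E"
proof -
  have "finite {D. certified_dominating_set V E D}"
    using assms by (rule finite_certified_dominating_sets)
  moreover have "card ` {D. certified_dominating_set V E D} \<noteq> {}"
    using certified_dominating_set_carrier by blast
  moreover have "domination_number V E \<le> card S" if "certified_dominating_set V E S" for S
    using assms that by (simp add: certified_dominating_set_def domination_number_le_card)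
  ultimately show ?thesis
    unfolding certified_domination_number_def by (auto intro: Min.boundedI)
qed

lemma dominating_set_delete_swap:
  assumes "simple_graph V E" "dominating_set V E D" "v \<in> D"
    and unique_outer_neighbour: "{u\<in>V - D. E v u} = {u}"
  shows "dominating_set (V - {v}) E (D - {v} \<union> {u})"
  unfolding dominating_set_def
proof (intro conjI ballI)
  show "D - {v} \<union> {u} \<subseteq> V - {v}"
    using assms(2,3) unique_outer_neighbour by (auto simp: dominating_set_def)
next
  fix w assume w: "w \<in> V - {v} - (D - {v} \<union> {u})"
  then have "w \<in> V - D" by auto
  then obtain d where d: "d \<in> D" "E w d"
    using assms(2) by (auto simp: dominating_set_def)
  have "d \<noteq> v"
  proof
    assume "d = v"
    with d assms(1,2) \<open>w \<in> V - D\<close> have "E v w"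
      by (auto simp: simple_graph_def dominating_set_def)
    with \<open>w \<in> V - D\<close> unique_outer_neighbour w show False by auto
  qed
  with d show "\<exists>d'\<in>D - {v} \<union> {u}. E w d'" by auto
qed

lemma domination_number_delete_le_card:
  assumes "simple_graph V E" "dominating_set V E D" "v \<in> D"
    and "card {u\<in>V - D. E v u} = 1"
  shows "domination_number (V - {v}) E \<le> card D"
proof -
  obtain u where u: "{u\<in>V - D. E v u} = {u}"
    using assms(4) card_1_singletonE by blast
  have fin: "finite V" and "finite D"
    using assms(1,2) finite_subset by (auto simp: simple_graph_def dominating_set_def)
  have "domination_number (V - {v}) E \<le> card (D - {v} \<union> {u})"
    using fin dominating_set_delete_swap[OF assms(1-3) u] by (intro domination_number_le_card) auto
  also have "\<dots> \<le> card (D - {v}) + 1"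
    using card_Un_le[of "D - {v}" "{u}"] by simp
  also have "\<dots> = card D"
    using \<open>finite D\<close> assms(3) card_Suc_Diff1 by fastforce
  finally show ?thesis .
qed

lemma gamma_set_certified_if_deletion_increases:
  assumes "simple_graph V E" "gamma_set V E D"
    and "\<forall>x\<in>D. domination_number (V - {x}) E > domination_number V E"
  shows "certified_dominating_set V E D"
  unfolding certified_dominating_set_def
proof (intro conjI ballI)
  show dom: "dominating_set V E D" using assms(2) by (simp add: gamma_set_def)
  fix v assume "v \<in> D"
  have "card {u\<in>V - D. E v u} \<noteq> 1"
  proof
    assume "card {u\<in>V - D. E v u} = 1"
    from domination_number_delete_le_card[OF assms(1) dom \<open>v \<in> D\<close> this]
    show False using assms(2,3) \<open>v \<in> D\<close> by (auto simp: gamma_set_def)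
  qed
  then show "card {u\<in>V - D. E v u} = 0 \<or> card {u\<in>V - D. E v u} \<ge> 2" by linarith
qed

theorem corollary2p5:
  fixes V :: "'a set" and E :: "'a \<Rightarrow> 'a \<Rightarrow> bool" and D :: "'a set"
  assumes "simple_graph V E"
    and "gamma_set V E D"
    and "\<forall>x\<in>D. domination_number (V - {x}) E > domination_number V E"
  shows "domination_number V E = certified_domination_number V E"
proof -
  have fin: "finite V" using assms(1) by (simp add: simple_graph_def)
  have "certified_domination_number V E \<le> card D"
    using fin gamma_set_certified_if_deletion_increases[OF assms]
    by (rule certified_domination_number_le_card)
  also have "card D = domination_number V E"
    using assms(2) by (simp add: gamma_set_def)
  finally show ?thesis
    using domination_number_le_certified_domination_number[OF fin, of E] by linarith
qed

end
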